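(* Let $S=(\mathrm{Id}_n+W_dV_d)\cdots(\mathrm{Id}_n+W_1V_1)Z$ and, for $\eta\in\mathbb C$, $Z_\eta=Z+\eta S$. Then for all $\mu,\eta\in\mathbb C$ and all $k,l\in\mathbb N$, $\{\operatorname{tr}Z_\mu^k,\operatorname{tr}Z_\eta^l\}=0$ on $\mathcal C^\times_{n,d,q}$.
   Context: Fix integers $n\ge1$, $d\ge1$ and $q\in\mathbb C^\times$ not a root of unity. Greek indices range over $\{1,\dots,d\}$; set $o(\alpha,\beta)=0$ if $\alpha=\beta$, $o(\alpha,\beta)=1$ if $\alpha<\beta$, $o(\alpha,\beta)=-1$ if $\alpha>\beta$. Let $\mathcal M^\times_{n,d,q}$ be the affine variety of tuples $(X,Z,V_1,\dots,V_d,W_1,\dots,W_d)$ with $X,Z\in\mathrm{GL}_n(\mathbb C)$, $V_\alpha\in\mathrm{Mat}_{1\times n}(\mathbb C)$, $W_\alpha\in\mathrm{Mat}_{n\times 1}(\mathbb C)$, such that every $\mathrm{Id}_n+W_\alpha V_\alpha$ is invertible and $XZX^{-1}Z^{-1}(\mathrm{Id}_n+W_1V_1)^{-1}\cdots(\mathrm{Id}_n+W_dV_d)^{-1}=q\,\mathrm{Id}_n$. $\mathrm{GL}_n$ acts by $g\cdot(X,Z,V_\alpha,W_\alpha)=(gXg^{-1},gZg^{-1},V_\alpha g^{-1},gW_\alpha)$; the action is free and $\mathcal C^\times_{n,d,q}=\mathcal M^\times_{n,d,q}/\!/\mathrm{GL}_n$ is a smooth affine variety of dimension $2nd$ with $\mathbb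 C[\mathcal C^\times_{n,d,q}]=\mathbb C[\mathcal M^\times_{n,d,q}]^{\mathrm{GL}_n}$. Write $V_{\alpha,j}$, $W_{\alpha,k}$ for the entries. Let $\{-,-\}$ be the antisymmetric biderivation on functions of $(X,Z,V_\alpha,W_\alpha)$ (Van den Bergh's quasi-Poisson bracket) given by $\{X_{ij},X_{kl}\}=\tfrac12(\delta_{il}(X^2)_{kj}-\delta_{kj}(X^2)_{il})$, $\{Z_{ij},Z_{kl}\}=\tfrac12(\delta_{kj}(Z^2)_{il}-\delta_{il}(Z^2)_{kj})$, $\{X_{ij},Z_{kl}\}=\tfrac12((ZX)_{kj}\delta_{il}+\delta_{kj}(XZ)_{il}+Z_{kj}X_{il}-X_{kj}Z_{il})$, $\{U_{ij},W_{\alpha,k}\}=\tfrac12(\delta_{kj}(UW_\alpha)_i-U_{kj}W_{\alpha,i})$, $\{U_{ij},V_{\alpha,l}\}=\tfrac12((V_\alpha U)_j\delta_{il}-V_{\alpha,j}U_{il})$ for $U\in\{X,Z\}$, $\{V_{\alpha,j},V_{\beta,l}\}=\tfrac12 o(\beta,\alpha)(V_{\beta,j}V_{\alpha,l}+V_{\alpha,j}V_{\beta,l})$, $\{W_{\alpha,i},W_{\beta,k}\}=\tfrac12 o(\beta,\alpha)(W_{\beta,k}W_{\alpha,i}+W_{\alpha,k}W_{\beta,i})$, $\{V_{\alpha,j},W_{\beta,k}\}=\delta_{\alpha\beta}(\delta_{kj}+\tfrac12W_{\alpha,k}V_{\alpha,j}+\tfrac12\delta_{kj}V_\alpha W_\alpha)+\tfrac12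 o(\alpha,\beta)(\delta_{kj}V_\alpha W_\beta+W_{\beta,k}V_{\alpha,j})$. Restricted to $\mathrm{GL}_n$-invariant functions this bracket induces a non-degenerate Poisson bracket on $\mathcal C^\times_{n,d,q}$ (quasi-Hamiltonian reduction); this is the Poisson bracket $\{-,-\}$ on $\mathcal C^\times_{n,d,q}$. *)

theory Defs
  imports "HOL-Analysis.Analysis" "Jordan_Normal_Form.Matrix"
begin

(* Coordinates on the ambient space of tuples (X,Z,V_1..V_d,W_1..W_d):
   Xc i j = X_{ij}, Zc i j = Z_{ij}  (0 <= i,j < n),
   Vc a j = V_{a,j}, Wc a k = W_{a,k} (1 <= a <= d, 0 <= j,k < n). *)
datatype coord = Xc nat nat | Zc nat nat | Vc nat nat | Wc nat nat

type_synonym point = "coord \<Rightarrow> complex"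

definition coords :: "nat \<Rightarrow> nat \<Rightarrow> coord set" where
  "coords n d =
     {Xc i j | i j. i < n \<and> j < n} \<union> {Zc i j | i j. i < n \<and> j < n} \<union>
     {Vc a j | a j. a \<in> {1..d} \<and> j < n} \<union> {Wc a k | a k. a \<in> {1..d} \<and> k < n}"

definition kd :: "nat \<Rightarrow> nat \<Rightarrow> complex" where
  "kd i j = (if i = j then 1 else 0)"

definition ord_sign :: "nat \<Rightarrow> nat \<Rightarrow> complex" where
  "ord_sign a b = (if a = b then 0 else if a < b then 1 else -1)"

definition Xmat :: "nat \<Rightarrow> point \<Rightarrow> complex mat" where
  "Xmat n p = mat n n (\<lambda>(i,j). p (Xc i j))"
definition Zmat :: "nat \<Rightarrow> point \<Rightarrow> complex mat" where
  "Zmat n p = mat n n (\<lambda>(i,j). p (Zc i j))"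
definition Vrow :: "nat \<Rightarrow> point \<Rightarrow> nat \<Rightarrow> complex mat" where
  "Vrow n p a = mat 1 n (\<lambda>(i,j). p (Vc a j))"
definition Wcol :: "nat \<Rightarrow> point \<Rightarrow> nat \<Rightarrow> complex mat" where
  "Wcol n p a = mat n 1 (\<lambda>(i,j). p (Wc a i))"

definition Amat :: "nat \<Rightarrow> point \<Rightarrow> nat \<Rightarrow> complex mat" where
  "Amat n p a = 1\<^sub>m n + Wcol n p a * Vrow n p a"

definition inv_of :: "nat \<Rightarrow> complex mat \<Rightarrow> bool" where
  "inv_of n A \<longleftrightarrow> A \<in> carrier_mat n n \<and> invertible_mat A"

definition minv :: "nat \<Rightarrow> complex mat \<Rightarrow> complex mat" where
  "minv n A = (SOME B. B \<in> carrier_mat n n \<and> A * B = 1\<^sub>m n \<and> B * A = 1\<^sub>m n)"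

definition mprod :: "nat \<Rightarrow> complex mat list \<Rightarrow> complex mat" where
  "mprod n Ms = foldr (*) Ms (1\<^sub>m n)"

definition Mx :: "nat \<Rightarrow> nat \<Rightarrow> complex \<Rightarrow> point set" where
  "Mx n d q = {p. invertible_mat (Xmat n p) \<and> invertible_mat (Zmat n p) \<and>
      (\<forall>a\<in>{1..d}. invertible_mat (Amat n p a)) \<and>
      Xmat n p * Zmat n p * minv n (Xmat n p) * minv n (Zmat n p) *
        mprod n (map (\<lambda>a. minv n (Amat n p a)) [1..<d+1]) = q \<cdot>\<^sub>m 1\<^sub>m n}"

definition Smat :: "nat \<Rightarrow> nat \<Rightarrow> point \<Rightarrow> complex mat" where
  "Smat n d p = mprod n (map (\<lambda>a. Amat n p a) (rev [1..<d+1])) * Zmat n p"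

definition Zeta :: "nat \<Rightarrow> nat \<Rightarrow> complex \<Rightarrow> point \<Rightarrow> complex mat" where
  "Zeta n d \<eta> p = Zmat n p + \<eta> \<cdot>\<^sub>m Smat n d p"

definition mtrace :: "complex mat \<Rightarrow> complex" where
  "mtrace A = (\<Sum>i<dim_row A. A $$ (i, i))"

definition trZpow :: "nat \<Rightarrow> nat \<Rightarrow> complex \<Rightarrow> nat \<Rightarrow> point \<Rightarrow> complex" where
  "trZpow n d \<eta> k p = mtrace (Zeta n d \<eta> p ^\<^sub>m k)"

(* brackets of coordinate functions, for the canonical orderings
   (X < Z < V < W); other orderings follow by antisymmetry *)
definition ent :: "nat \<Rightarrow> point \<Rightarrow> (nat \<Rightarrow> nat \<Rightarrow> coord) \<Rightarrow> (nat \<Rightarrow> nat \<Rightarrow> coord) \<Rightarrow> nat \<Rightarrow> nat \<Rightarrow> complex" where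
  "ent n p A B i j = (\<Sum>m<n. p (A i m) * p (B m j))"

fun cb0 :: "nat \<Rightarrow> point \<Rightarrow> coord \<Rightarrow> coord \<Rightarrow> complex" where
  "cb0 n p (Xc i j) (Xc k l) = 1/2 * (kd i l * ent n p Xc Xc k j - kd k j * ent n p Xc Xc i l)"
| "cb0 n p (Zc i j) (Zc k l) = 1/2 * (kd k j * ent n p Zc Zc i l - kd i l * ent n p Zc Zc k j)"
| "cb0 n p (Xc i j) (Zc k l) = 1/2 * (ent n p Zc Xc k j * kd i l + kd k j * ent n p Xc Zc i l
                                     + p (Zc k j) * p (Xc i l) - p (Xc k j) * p (Zc i l))"
| "cb0 n p (Xc i j) (Wc a k) = 1/2 * (kd k j * (\<Sum>m<n. p (Xc i m) * p (Wc a m)) - p (Xc k j) * p (Wc a i))"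
| "cb0 n p (Zc i j) (Wc a k) = 1/2 * (kd k j * (\<Sum>m<n. p (Zc i m) * p (Wc a m)) - p (Zc k j) * p (Wc a i))"
| "cb0 n p (Xc i j) (Vc a l) = 1/2 * ((\<Sum>m<n. p (Vc a m) * p (Xc m j)) * kd i l - p (Vc a j) * p (Xc i l))"
| "cb0 n p (Zc i j) (Vc a l) = 1/2 * ((\<Sum>m<n. p (Vc a m) * p (Zc m j)) * kd i l - p (Vc a j) * p (Zc i l))"
| "cb0 n p (Vc a j) (Vc b l) = 1/2 * ord_sign b a * (p (Vc b j) * p (Vc a l) + p (Vc a j) * p (Vc b l))"
| "cb0 n p (Wc a i) (Wc b k) = 1/2 * ord_sign b a * (p (Wc b k) * p (Wc a i) + p (Wc a k) * p (Wc b i))"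
| "cb0 n p (Vc a j) (Wc b k) =
     kd a b * (kd k j + 1/2 * p (Wc a k) * p (Vc a j) + 1/2 * kd k j * (\<Sum>m<n. p (Vc a m) * p (Wc a m)))
     + 1/2 * ord_sign a b * (kd k j * (\<Sum>m<n. p (Vc a m) * p (Wc b m)) + p (Wc b k) * p (Vc a j))"
| "cb0 n p _ _ = 0"

fun crank :: "coord \<Rightarrow> nat" where
  "crank (Xc _ _) = 0" | "crank (Zc _ _) = 1" | "crank (Vc _ _) = 2" | "crank (Wc _ _) = 3"

definition cb :: "nat \<Rightarrow> point \<Rightarrow> coord \<Rightarrow> coord \<Rightarrow> complex" where
  "cb n p a b = (if crank a \<le> crank b then cb0 n p a b else - cb0 n p b a)"

definition pd :: "(point \<Rightarrow> complex) \<Rightarrow> coord \<Rightarrow> point \<Rightarrow> complex" where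
  "pd f c p = deriv (\<lambda>t. f (p(c := p c + t))) 0"

definition qpb :: "nat \<Rightarrow> nat \<Rightarrow> (point \<Rightarrow> complex) \<Rightarrow> (point \<Rightarrow> complex) \<Rightarrow> point \<Rightarrow> complex" where
  "qpb n d f g p = (\<Sum>a\<in>coords n d. \<Sum>b\<in>coords n d. pd f a p * pd g b p * cb n p a b)"

end

theory Submission
  imports Defs
begin

text \<open>
  Since the bracket is a biderivation, {tr Z_\<mu>^k, tr Z_\<eta>^l} is the contraction of
  k Z_\<mu>^(k-1) and l Z_\<eta>^(l-1) against the brackets {(Z_\<mu>)_ij, (Z_\<eta>)_kl}. These are
  recorded as double brackets {{M, N}} = \<Sum> c U \<otimes> Y, meaning {M_ij, N_kl} = \<Sum> c U_kj Y_il,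
  which satisfy a Leibniz rule in each argument. The brackets of the coordinates give
  {{Z, Z}}, {{Z, A_a}} and {{A_a, A_b}} for A_a = Id + W_a V_a, and an induction over the
  factors of A_d \<cdots> A_1 yields
    {{Z_\<mu>, Z_\<eta>}} = 1/2 (1 \<otimes> Z_\<mu> Z_\<eta> - Z_\<eta> Z_\<mu> \<otimes> 1 + Z_\<mu> \<otimes> Z - Z \<otimes> Z_\<mu> + Z_\<eta> \<otimes> Z - Z \<otimes> Z_\<eta>).
  The contraction turns each term into the trace of a product of four matrices, and by
  cyclicity of the trace and Z_\<mu> - Z_\<eta> = (\<mu> - \<eta>) S the terms cancel.
\<close>

section \<open>Polynomial functions of the coordinates\<close>

inductive_set poly_fun :: "(point \<Rightarrow> complex) set" where
  poly_fun_const: "(\<lambda>q. c) \<in> poly_fun"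
| poly_fun_coord: "(\<lambda>q. q x) \<in> poly_fun"
| poly_fun_add: "f \<in> poly_fun \<Longrightarrow> g \<in> poly_fun \<Longrightarrow> (\<lambda>q. f q + g q) \<in> poly_fun"
| poly_fun_mult: "f \<in> poly_fun \<Longrightarrow> g \<in> poly_fun \<Longrightarrow> (\<lambda>q. f q * g q) \<in> poly_fun"

lemma poly_fun_sum:
  "finite S \<Longrightarrow> (\<And>m. m \<in> S \<Longrightarrow> f m \<in> poly_fun) \<Longrightarrow> (\<lambda>q. \<Sum>m\<in>S. f m q) \<in> poly_fun"
proof (induction S rule: finite_induct)
  case empty
  then show ?case using poly_fun_const[of 0] by simp
next
  case (insert x F)
  then show ?case using poly_fun_add[of "f x" "\<lambda>q. \<Sum>m\<in>F. f m q"] by simp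
qed

lemma poly_fun_field_differentiable:
  "f \<in> poly_fun \<Longrightarrow> (\<lambda>t. f (p(c := p c + t))) field_differentiable at 0"
proof (induction rule: poly_fun.induct)
  case (poly_fun_coord x)
  show ?case by (cases "x = c") (auto intro!: derivative_eq_intros simp: field_differentiable_def)
qed (auto intro: field_differentiable_add field_differentiable_mult)

lemma has_field_derivative_pd:
  "f \<in> poly_fun \<Longrightarrow> ((\<lambda>t. f (p(c := p c + t))) has_field_derivative pd f c p) (at 0)"
  unfolding pd_def by (simp add: DERIV_deriv_iff_field_differentiable poly_fun_field_differentiable)

lemma pd_const [simp]: "pd (\<lambda>q. a) c p = 0"
  unfolding pd_def by simp

lemma pd_coord: "pd (\<lambda>q. q x) c p = (if x = c then 1 else 0)"
proof -
  have "((\<lambda>t. (p(c := p c + t)) x) has_field_derivative (if x = c then 1 else 0)) (at 0)"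
    by (cases "x = c") (auto intro!: derivative_eq_intros)
  then show ?thesis unfolding pd_def by (rule DERIV_imp_deriv)
qed

lemma pd_add:
  assumes "f \<in> poly_fun" and "g \<in> poly_fun"
  shows "pd (\<lambda>q. f q + g q) c p = pd f c p + pd g c p"
proof -
  have "((\<lambda>t. f (p(c := p c + t)) + g (p(c := p c + t))) has_field_derivative
      pd f c p + pd g c p) (at 0)"
    by (intro derivative_intros has_field_derivative_pd assms)
  then show ?thesis unfolding pd_def[of "\<lambda>q. f q + g q"] by (rule DERIV_imp_deriv)
qed

lemma pd_mult:
  assumes "f \<in> poly_fun" and "g \<in> poly_fun"
  shows "pd (\<lambda>q. f q * g q) c p = f p * pd g c p + pd f c p * g p"
proof -
  have "((\<lambda>t. f (p(c := p c + t)) * g (p(c := p c + t))) has_field_derivative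
      f p * pd g c p + pd f c p * g p) (at 0)"
    using DERIV_mult[OF has_field_derivative_pd[OF assms(1)] has_field_derivative_pd[OF assms(2)]]
    by (simp add: algebra_simps)
  then show ?thesis unfolding pd_def[of "\<lambda>q. f q * g q"] by (rule DERIV_imp_deriv)
qed

lemma pd_sum:
  "finite S \<Longrightarrow> (\<And>m. m \<in> S \<Longrightarrow> f m \<in> poly_fun) \<Longrightarrow>
    pd (\<lambda>q. \<Sum>m\<in>S. f m q) c p = (\<Sum>m\<in>S. pd (f m) c p)"
proof (induction S rule: finite_induct)
  case (insert x F)
  then have "pd (\<lambda>q. f x q + (\<Sum>m\<in>F. f m q)) c p = pd (f x) c p + pd (\<lambda>q. \<Sum>m\<in>F. f m q) c p"
    by (intro pd_add poly_fun_sum) auto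
  with insert show ?case by simp
qed simp

lemma finite_coords [simp]: "finite (coords n d)"
proof -
  have "coords n d = (\<lambda>(i,j). Xc i j) ` ({..<n} \<times> {..<n}) \<union> (\<lambda>(i,j). Zc i j) ` ({..<n} \<times> {..<n}) \<union>
      (\<lambda>(a,j). Vc a j) ` ({1..d} \<times> {..<n}) \<union> (\<lambda>(a,j). Wc a j) ` ({1..d} \<times> {..<n})"
    unfolding coords_def by auto
  then show ?thesis by simp
qed

lemma coords_memI:
  "i < n \<Longrightarrow> j < n \<Longrightarrow> Zc i j \<in> coords n d"
  "a \<in> {1..d} \<Longrightarrow> j < n \<Longrightarrow> Vc a j \<in> coords n d"
  "a \<in> {1..d} \<Longrightarrow> j < n \<Longrightarrow> Wc a j \<in> coords n d"
  unfolding coords_def by auto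

lemma qpb_mult_left:
  "f \<in> poly_fun \<Longrightarrow> g \<in> poly_fun \<Longrightarrow>
    qpb n d (\<lambda>q. f q * g q) h p = f p * qpb n d g h p + g p * qpb n d f h p"
  unfolding qpb_def by (simp add: pd_mult sum_distrib_left sum.distrib algebra_simps)

lemma qpb_mult_right:
  "f \<in> poly_fun \<Longrightarrow> g \<in> poly_fun \<Longrightarrow>
    qpb n d h (\<lambda>q. f q * g q) p = f p * qpb n d h g p + g p * qpb n d h f p"
  unfolding qpb_def by (simp add: pd_mult sum_distrib_left sum.distrib algebra_simps)

lemma qpb_add_left:
  "f \<in> poly_fun \<Longrightarrow> g \<in> poly_fun \<Longrightarrow>
    qpb n d (\<lambda>q. f q + g q) h p = qpb n d f h p + qpb n d g h p"
  unfolding qpb_def by (simp add: pd_add ring_distribs sum.distrib)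

lemma qpb_add_right:
  "f \<in> poly_fun \<Longrightarrow> g \<in> poly_fun \<Longrightarrow>
    qpb n d h (\<lambda>q. f q + g q) p = qpb n d h f p + qpb n d h g p"
  unfolding qpb_def by (simp add: pd_add ring_distribs sum.distrib)

lemma qpb_const_left [simp]: "qpb n d (\<lambda>q. c) h p = 0"
  and qpb_const_right [simp]: "qpb n d h (\<lambda>q. c) p = 0"
  unfolding qpb_def by simp_all

lemma qpb_cmult_left: "f \<in> poly_fun \<Longrightarrow> qpb n d (\<lambda>q. c * f q) h p = c * qpb n d f h p"
  using qpb_mult_left[OF poly_fun_const[of c], of f n d h p] by simp

lemma qpb_cmult_right: "f \<in> poly_fun \<Longrightarrow> qpb n d h (\<lambda>q. c * f q) p = c * qpb n d h f p"
  using qpb_mult_right[OF poly_fun_const[of c], of f n d h p] by simp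

lemma qpb_sum_left:
  "finite S \<Longrightarrow> (\<And>m. m \<in> S \<Longrightarrow> f m \<in> poly_fun) \<Longrightarrow>
    qpb n d (\<lambda>q. \<Sum>m\<in>S. f m q) h p = (\<Sum>m\<in>S. qpb n d (f m) h p)"
proof (induction S rule: finite_induct)
  case (insert x F)
  then have "qpb n d (\<lambda>q. f x q + (\<Sum>m\<in>F. f m q)) h p =
      qpb n d (f x) h p + qpb n d (\<lambda>q. \<Sum>m\<in>F. f m q) h p"
    by (intro qpb_add_left poly_fun_sum) auto
  with insert show ?case by simp
qed simp

lemma qpb_sum_right:
  "finite S \<Longrightarrow> (\<And>m. m \<in> S \<Longrightarrow> f m \<in> poly_fun) \<Longrightarrow>
    qpb n d h (\<lambda>q. \<Sum>m\<in>S. f m q) p = (\<Sum>m\<in>S. qpb n d h (f m) p)"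
proof (induction S rule: finite_induct)
  case (insert x F)
  then have "qpb n d h (\<lambda>q. f x q + (\<Sum>m\<in>F. f m q)) p =
      qpb n d h (f x) p + qpb n d h (\<lambda>q. \<Sum>m\<in>F. f m q) p"
    by (intro qpb_add_right poly_fun_sum) auto
  with insert show ?case by simp
qed simp

lemma cb_antisym: "cb n p b a = - cb n p a b"
proof -
  have kd_sym: "kd i j = kd j i" and ord_sign_anti: "ord_sign i j = - ord_sign j i" for i j
    unfolding kd_def ord_sign_def by auto
  show ?thesis
  proof (cases a; cases b)
    fix i j k l assume "a = Vc i j" "b = Vc k l"
    then show ?thesis by (simp add: cb_def ord_sign_anti[of i k] algebra_simps)
  next
    fix i j k l assume "a = Wc i j" "b = Wc k l"
    then show ?thesis by (simp add: cb_def ord_sign_anti[of i k] algebra_simps)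
  qed (simp_all add: cb_def kd_sym algebra_simps)
qed

lemma qpb_antisym: "qpb n d g f p = - qpb n d f g p"
proof -
  have "qpb n d g f p = (\<Sum>a\<in>coords n d. \<Sum>b\<in>coords n d. pd g b p * pd f a p * cb n p b a)"
    unfolding qpb_def by (rule sum.swap)
  also have "\<dots> = (\<Sum>a\<in>coords n d. \<Sum>b\<in>coords n d. - (pd f a p * pd g b p * cb n p a b))"
    by (intro sum.cong refl) (subst cb_antisym, simp)
  also have "\<dots> = - qpb n d f g p"
    unfolding qpb_def by (simp add: sum_negf)
  finally show ?thesis .
qed

lemma qpb_gradient_comb_left:
  assumes "finite S" and "\<And>a. a \<in> coords n d \<Longrightarrow> pd f a p = (\<Sum>x\<in>S. c x * pd (h x) a p)"
  shows "qpb n d f g p = (\<Sum>x\<in>S. c x * qpb n d (h x) g p)"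
proof -
  have "qpb n d f g p =
      (\<Sum>a\<in>coords n d. \<Sum>b\<in>coords n d. \<Sum>x\<in>S. c x * (pd (h x) a p * pd g b p * cb n p a b))"
    unfolding qpb_def by (intro sum.cong refl) (simp add: assms(2) sum_distrib_right mult.assoc)
  also have "\<dots> =
      (\<Sum>x\<in>S. \<Sum>a\<in>coords n d. \<Sum>b\<in>coords n d. c x * (pd (h x) a p * pd g b p * cb n p a b))"
    by (subst sum.swap, subst (2) sum.swap) (rule refl)
  also have "\<dots> = (\<Sum>x\<in>S. c x * qpb n d (h x) g p)"
    unfolding qpb_def by (simp add: sum_distrib_left)
  finally show ?thesis .
qed

lemma qpb_gradient_comb_right:
  assumes "finite S" and "\<And>a. a \<in> coords n d \<Longrightarrow> pd g a p = (\<Sum>x\<in>S. c x * pd (h x) a p)"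
  shows "qpb n d f g p = (\<Sum>x\<in>S. c x * qpb n d f (h x) p)"
  using qpb_gradient_comb_left[of S n d g p c h f, OF assms]
  by (simp add: qpb_antisym[of n d g] qpb_antisym[of n d "h _"] sum_negf)

lemma qpb_coord:
  assumes "x \<in> coords n d" and "y \<in> coords n d"
  shows "qpb n d (\<lambda>q. q x) (\<lambda>q. q y) p = cb n p x y"
proof -
  have delta: "(if P then 1 else 0) * t = (if P then t else 0)"
    and delta': "(if P then t else 0) * u = (if P then t * u else 0)" for P and t u :: complex
    by simp_all
  have "qpb n d (\<lambda>q. q x) (\<lambda>q. q y) p =
      (\<Sum>a\<in>coords n d. if x = a then (\<Sum>b\<in>coords n d. if y = b then cb n p a b else 0) else 0)"
    unfolding qpb_def pd_coord by (intro sum.cong refl) (cases "x = a"; simp add: delta delta')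
  also have "\<dots> = cb n p x y"
    using assms by (simp only: sum.delta' finite_coords if_True)
  finally show ?thesis .
qed

section \<open>Double brackets of matrix-valued functions\<close>

lemma mat_mult_entry:
  "A \<in> carrier_mat n n \<Longrightarrow> B \<in> carrier_mat n n \<Longrightarrow> i < n \<Longrightarrow> j < n \<Longrightarrow>
    (A * B) $$ (i,j) = (\<Sum>m<n. A $$ (i,m) * B $$ (m,j))"
  by (simp add: scalar_prod_def lessThan_atLeast0 mult.commute)

lemma mult_carrier_square [simp]:
  "A \<in> carrier_mat n n \<Longrightarrow> B \<in> carrier_mat n n \<Longrightarrow> A * B \<in> carrier_mat n n"
  by (rule mult_carrier_mat)

definition poly_mat :: "nat \<Rightarrow> (point \<Rightarrow> complex mat) \<Rightarrow> bool" where
  "poly_mat n M \<longleftrightarrow> (\<forall>q. M q \<in> carrier_mat n n) \<and> (\<forall>i<n. \<forall>j<n. (\<lambda>q. M q $$ (i,j)) \<in> poly_fun)"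

lemma poly_mat_carrier [simp]: "poly_mat n M \<Longrightarrow> M q \<in> carrier_mat n n"
  unfolding poly_mat_def by auto

lemma poly_mat_dim [simp]: "poly_mat n M \<Longrightarrow> dim_row (M q) = n" "poly_mat n M \<Longrightarrow> dim_col (M q) = n"
  unfolding poly_mat_def carrier_mat_def by auto

lemma poly_mat_entry: "poly_mat n M \<Longrightarrow> i < n \<Longrightarrow> j < n \<Longrightarrow> (\<lambda>q. M q $$ (i,j)) \<in> poly_fun"
  unfolding poly_mat_def by auto

lemma mult_entry_fun:
  "poly_mat n M \<Longrightarrow> poly_mat n N \<Longrightarrow> i < n \<Longrightarrow> j < n \<Longrightarrow>
    (\<lambda>q. (M q * N q) $$ (i,j)) = (\<lambda>q. \<Sum>m<n. M q $$ (i,m) * N q $$ (m,j))"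
  by (intro ext mat_mult_entry) auto

lemma poly_mat_mult: "poly_mat n M \<Longrightarrow> poly_mat n N \<Longrightarrow> poly_mat n (\<lambda>q. M q * N q)"
  unfolding poly_mat_def[of n "\<lambda>q. M q * N q"]
  by (auto simp: mult_entry_fun simp del: index_mult_mat
      intro!: poly_fun_sum poly_fun_mult poly_mat_entry mult_carrier_mat)

lemma poly_mat_add: "poly_mat n M \<Longrightarrow> poly_mat n N \<Longrightarrow> poly_mat n (\<lambda>q. M q + N q)"
  unfolding poly_mat_def[of n "\<lambda>q. M q + N q"] by (auto intro!: poly_fun_add poly_mat_entry)

lemma poly_mat_smult: "poly_mat n M \<Longrightarrow> poly_mat n (\<lambda>q. c \<cdot>\<^sub>m M q)"
  unfolding poly_mat_def[of n "\<lambda>q. c \<cdot>\<^sub>m M q"] by (auto intro!: poly_fun_mult poly_fun_const poly_mat_entry)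

lemma poly_mat_const: "C \<in> carrier_mat n n \<Longrightarrow> poly_mat n (\<lambda>q. C)"
  unfolding poly_mat_def by (auto intro: poly_fun_const)

lemma poly_mat_pow: "poly_mat n M \<Longrightarrow> poly_mat n (\<lambda>q. M q ^\<^sub>m k)"
proof (induction k)
  case 0
  then have "(\<lambda>q. M q ^\<^sub>m 0) = (\<lambda>q. 1\<^sub>m n)" by auto
  then show ?case by (simp add: poly_mat_const)
next
  case (Suc k)
  then show ?case using poly_mat_mult[OF Suc.IH Suc.prems] by simp
qed

definition entry_qpb :: "nat \<Rightarrow> nat \<Rightarrow> point \<Rightarrow> (point \<Rightarrow> complex mat) \<Rightarrow> (point \<Rightarrow> complex mat) \<Rightarrow>
    nat \<Rightarrow> nat \<Rightarrow> nat \<Rightarrow> nat \<Rightarrow> complex" where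
  "entry_qpb n d p M N i j k l = qpb n d (\<lambda>q. M q $$ (i,j)) (\<lambda>q. N q $$ (k,l)) p"

text \<open>
  A list of triples (c, U, Y) encodes the double bracket \<Sum> c U \<otimes> Y; its (i,j,k,l) entry
  \<Sum> c U_kj Y_il is the value of {M_ij, N_kl} when the list is {{M, N}}.
\<close>

type_synonym dbr = "(complex \<times> complex mat \<times> complex mat) list"

fun dbr_entry :: "dbr \<Rightarrow> nat \<Rightarrow> nat \<Rightarrow> nat \<Rightarrow> nat \<Rightarrow> complex" where
  "dbr_entry [] i j k l = 0"
| "dbr_entry ((c,U,Y) # xs) i j k l = c * U $$ (k,j) * Y $$ (i,l) + dbr_entry xs i j k l"

fun dbr_carrier :: "nat \<Rightarrow> dbr \<Rightarrow> bool" where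
  "dbr_carrier n [] = True"
| "dbr_carrier n ((c,U,Y) # xs) \<longleftrightarrow> U \<in> carrier_mat n n \<and> Y \<in> carrier_mat n n \<and> dbr_carrier n xs"

definition dbr_map :: "(complex mat \<Rightarrow> complex mat) \<Rightarrow> (complex mat \<Rightarrow> complex mat) \<Rightarrow> dbr \<Rightarrow> dbr" where
  "dbr_map f g xs = map (\<lambda>(c,U,Y). (c, f U, g Y)) xs"

definition dbr_swap :: "dbr \<Rightarrow> dbr" where
  "dbr_swap xs = map (\<lambda>(c,U,Y). (- c, Y, U)) xs"

definition dbr_scale :: "complex \<Rightarrow> dbr \<Rightarrow> dbr" where
  "dbr_scale a xs = map (\<lambda>(c,U,Y). (a * c, U, Y)) xs"

lemma dbr_ops_simps [simp]:
  "dbr_map f g [] = []" "dbr_map f g ((c,U,Y) # xs) = (c, f U, g Y) # dbr_map f g xs"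
  "dbr_swap [] = []" "dbr_swap ((c,U,Y) # xs) = (- c, Y, U) # dbr_swap xs"
  "dbr_scale a [] = []" "dbr_scale a ((c,U,Y) # xs) = (a * c, U, Y) # dbr_scale a xs"
  by (simp_all add: dbr_map_def dbr_swap_def dbr_scale_def)

lemma dbr_entry_append [simp]:
  "dbr_entry (xs @ ys) i j k l = dbr_entry xs i j k l + dbr_entry ys i j k l"
  by (induction xs rule: dbr_carrier.induct) auto

lemma dbr_entry_swap: "dbr_entry (dbr_swap xs) i j k l = - dbr_entry xs k l i j"
  by (induction xs rule: dbr_carrier.induct) (auto simp: algebra_simps)

lemma dbr_entry_scale: "dbr_entry (dbr_scale a xs) i j k l = a * dbr_entry xs i j k l"
  by (induction xs rule: dbr_carrier.induct) (auto simp: algebra_simps)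

lemma dbr_carrier_append [simp]: "dbr_carrier n (xs @ ys) \<longleftrightarrow> dbr_carrier n xs \<and> dbr_carrier n ys"
  by (induction xs rule: dbr_carrier.induct) auto

lemma dbr_carrier_ops [simp]:
  "dbr_carrier n xs \<Longrightarrow> M \<in> carrier_mat n n \<Longrightarrow> dbr_carrier n (dbr_map (\<lambda>U. U) (\<lambda>Y. M * Y) xs)"
  "dbr_carrier n xs \<Longrightarrow> M \<in> carrier_mat n n \<Longrightarrow> dbr_carrier n (dbr_map (\<lambda>U. U * M) (\<lambda>Y. Y) xs)"
  "dbr_carrier n xs \<Longrightarrow> M \<in> carrier_mat n n \<Longrightarrow> dbr_carrier n (dbr_map (\<lambda>U. M * U) (\<lambda>Y. Y) xs)"
  "dbr_carrier n xs \<Longrightarrow> M \<in> carrier_mat n n \<Longrightarrow> dbr_carrier n (dbr_map (\<lambda>U. U) (\<lambda>Y. Y * M) xs)"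
  "dbr_carrier n xs \<Longrightarrow> dbr_carrier n (dbr_swap xs)"
  "dbr_carrier n xs \<Longrightarrow> dbr_carrier n (dbr_scale a xs)"
  by (induction xs rule: dbr_carrier.induct) auto

lemma dbr_entry_left_mult1:
  assumes "dbr_carrier n xs" and "M \<in> carrier_mat n n" and "i < n" and "l < n"
  shows "(\<Sum>m<n. M $$ (i,m) * dbr_entry xs m j k l) = dbr_entry (dbr_map (\<lambda>U. U) (\<lambda>Y. M * Y) xs) i j k l"
  using assms
  by (induction xs rule: dbr_carrier.induct)
    (auto simp: mat_mult_entry sum.distrib sum_distrib_left algebra_simps simp del: index_mult_mat)

lemma dbr_entry_right_mult1:
  assumes "dbr_carrier n xs" and "N \<in> carrier_mat n n" and "k < n" and "j < n"
  shows "(\<Sum>m<n. dbr_entry xs i m k l * N $$ (m,j)) = dbr_entry (dbr_map (\<lambda>U. U * N) (\<lambda>Y. Y) xs) i j k l"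
  using assms
  by (induction xs rule: dbr_carrier.induct)
    (auto simp: mat_mult_entry sum.distrib sum_distrib_left algebra_simps simp del: index_mult_mat)

lemma dbr_entry_left_mult2:
  assumes "dbr_carrier n xs" and "M \<in> carrier_mat n n" and "k < n" and "j < n"
  shows "(\<Sum>m<n. M $$ (k,m) * dbr_entry xs i j m l) = dbr_entry (dbr_map (\<lambda>U. M * U) (\<lambda>Y. Y) xs) i j k l"
  using assms
  by (induction xs rule: dbr_carrier.induct)
    (auto simp: mat_mult_entry sum.distrib sum_distrib_left algebra_simps simp del: index_mult_mat)

lemma dbr_entry_right_mult2:
  assumes "dbr_carrier n xs" and "N \<in> carrier_mat n n" and "i < n" and "l < n"
  shows "(\<Sum>m<n. dbr_entry xs i j k m * N $$ (m,l)) = dbr_entry (dbr_map (\<lambda>U. U) (\<lambda>Y. Y * N) xs) i j k l"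
  using assms
  by (induction xs rule: dbr_carrier.induct)
    (auto simp: mat_mult_entry sum.distrib sum_distrib_left algebra_simps simp del: index_mult_mat)


lemma entry_qpb_mult_left:
  assumes M: "poly_mat n M" and N: "poly_mat n N" and "i < n" "j < n"
  shows "entry_qpb n d p (\<lambda>q. M q * N q) K i j k l =
    (\<Sum>m<n. M p $$ (i,m) * entry_qpb n d p N K m j k l) + (\<Sum>m<n. entry_qpb n d p M K i m k l * N p $$ (m,j))"
  unfolding entry_qpb_def mult_entry_fun[OF M N assms(3,4)] using assms
  by (subst qpb_sum_left)
    (auto simp: qpb_mult_left poly_mat_entry sum.distrib mult.commute intro!: poly_fun_mult poly_mat_entry)

lemma entry_qpb_mult_right:
  assumes M: "poly_mat n M" and N: "poly_mat n N" and "k < n" "l < n"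
  shows "entry_qpb n d p K (\<lambda>q. M q * N q) i j k l =
    (\<Sum>m<n. M p $$ (k,m) * entry_qpb n d p K N i j m l) + (\<Sum>m<n. entry_qpb n d p K M i j k m * N p $$ (m,l))"
  unfolding entry_qpb_def mult_entry_fun[OF M N assms(3,4)] using assms
  by (subst qpb_sum_right)
    (auto simp: qpb_mult_right poly_mat_entry sum.distrib mult.commute intro!: poly_fun_mult poly_mat_entry)

definition has_dbr :: "nat \<Rightarrow> nat \<Rightarrow> point \<Rightarrow> (point \<Rightarrow> complex mat) \<Rightarrow> (point \<Rightarrow> complex mat) \<Rightarrow> dbr \<Rightarrow> bool" where
  "has_dbr n d p M N xs \<longleftrightarrow> dbr_carrier n xs \<and>
    (\<forall>i<n. \<forall>j<n. \<forall>k<n. \<forall>l<n. entry_qpb n d p M N i j k l = dbr_entry xs i j k l)"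

lemma has_dbrI:
  "dbr_carrier n xs \<Longrightarrow>
    (\<And>i j k l. i < n \<Longrightarrow> j < n \<Longrightarrow> k < n \<Longrightarrow> l < n \<Longrightarrow> entry_qpb n d p M N i j k l = dbr_entry xs i j k l) \<Longrightarrow>
    has_dbr n d p M N xs"
  unfolding has_dbr_def by blast

lemma has_dbr_cong:
  "has_dbr n d p M N xs \<Longrightarrow> dbr_carrier n ys \<Longrightarrow>
    (\<And>i j k l. i < n \<Longrightarrow> j < n \<Longrightarrow> k < n \<Longrightarrow> l < n \<Longrightarrow> dbr_entry xs i j k l = dbr_entry ys i j k l) \<Longrightarrow>
    has_dbr n d p M N ys"
  unfolding has_dbr_def by auto

lemma has_dbr_mult_left:
  assumes M: "poly_mat n M" and N: "poly_mat n N"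
    and xs: "has_dbr n d p N K xs" and ys: "has_dbr n d p M K ys"
  shows "has_dbr n d p (\<lambda>q. M q * N q) K
    (dbr_map (\<lambda>U. U) (\<lambda>Y. M p * Y) xs @ dbr_map (\<lambda>U. U * N p) (\<lambda>Y. Y) ys)"
  using xs ys M N unfolding has_dbr_def
  by (auto simp: entry_qpb_mult_left dbr_entry_left_mult1 dbr_entry_right_mult1)

lemma has_dbr_mult_right:
  assumes M: "poly_mat n M" and N: "poly_mat n N"
    and xs: "has_dbr n d p K N xs" and ys: "has_dbr n d p K M ys"
  shows "has_dbr n d p K (\<lambda>q. M q * N q)
    (dbr_map (\<lambda>U. M p * U) (\<lambda>Y. Y) xs @ dbr_map (\<lambda>U. U) (\<lambda>Y. Y * N p) ys)"
  using xs ys M N unfolding has_dbr_def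
  by (auto simp: entry_qpb_mult_right dbr_entry_left_mult2 dbr_entry_right_mult2)

lemma has_dbr_add_left:
  "poly_mat n M \<Longrightarrow> poly_mat n N \<Longrightarrow> has_dbr n d p M K xs \<Longrightarrow> has_dbr n d p N K ys \<Longrightarrow>
    has_dbr n d p (\<lambda>q. M q + N q) K (xs @ ys)"
  unfolding has_dbr_def entry_qpb_def by (simp add: qpb_add_left poly_mat_entry)

lemma has_dbr_add_right:
  "poly_mat n M \<Longrightarrow> poly_mat n N \<Longrightarrow> has_dbr n d p K M xs \<Longrightarrow> has_dbr n d p K N ys \<Longrightarrow>
    has_dbr n d p K (\<lambda>q. M q + N q) (xs @ ys)"
  unfolding has_dbr_def entry_qpb_def by (simp add: qpb_add_right poly_mat_entry)

lemma has_dbr_smult_left: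
  "poly_mat n M \<Longrightarrow> has_dbr n d p M K xs \<Longrightarrow> has_dbr n d p (\<lambda>q. c \<cdot>\<^sub>m M q) K (dbr_scale c xs)"
  unfolding has_dbr_def entry_qpb_def by (simp add: qpb_cmult_left poly_mat_entry dbr_entry_scale)

lemma has_dbr_smult_right:
  "poly_mat n M \<Longrightarrow> has_dbr n d p K M xs \<Longrightarrow> has_dbr n d p K (\<lambda>q. c \<cdot>\<^sub>m M q) (dbr_scale c xs)"
  unfolding has_dbr_def entry_qpb_def by (simp add: qpb_cmult_right poly_mat_entry dbr_entry_scale)

lemma has_dbr_const_right: "has_dbr n d p K (\<lambda>q. C) []"
  unfolding has_dbr_def entry_qpb_def by simp

lemma has_dbr_swap: "has_dbr n d p M N xs \<Longrightarrow> has_dbr n d p N M (dbr_swap xs)"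
  unfolding has_dbr_def entry_qpb_def by (simp add: dbr_entry_swap qpb_antisym[of n d "\<lambda>q. N q $$ _"])

section \<open>Double brackets of the generators\<close>

definition dbr_self :: "nat \<Rightarrow> complex mat \<Rightarrow> dbr" where
  "dbr_self n M = [(1/2, 1\<^sub>m n, M * M), (-1/2, M * M, 1\<^sub>m n)]"

definition dbr_ZA :: "nat \<Rightarrow> complex mat \<Rightarrow> complex mat \<Rightarrow> dbr" where
  "dbr_ZA n Z A = [(1/2, A * Z, 1\<^sub>m n), (1/2, 1\<^sub>m n, Z * A), (-1/2, A, Z), (-1/2, Z, A)]"

definition dbr_AA :: "nat \<Rightarrow> complex mat \<Rightarrow> complex mat \<Rightarrow> dbr" where
  "dbr_AA n A B = [(1/2, B, A), (1/2, A, B), (-1/2, 1\<^sub>m n, A * B), (-1/2, B * A, 1\<^sub>m n)]"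

lemma Zmat_carrier [simp]: "Zmat n q \<in> carrier_mat n n"
  unfolding Zmat_def by simp

lemma Zmat_entry [simp]: "i < n \<Longrightarrow> j < n \<Longrightarrow> Zmat n q $$ (i,j) = q (Zc i j)"
  unfolding Zmat_def by simp

lemma Amat_carrier [simp]: "Amat n q a \<in> carrier_mat n n"
  unfolding Amat_def Wcol_def Vrow_def carrier_mat_def by simp

lemma Amat_entry [simp]: "i < n \<Longrightarrow> j < n \<Longrightarrow> Amat n q a $$ (i,j) = kd i j + q (Wc a i) * q (Vc a j)"
  unfolding Amat_def Wcol_def Vrow_def kd_def by (simp add: scalar_prod_def)

lemma one_mat_entry: "i < n \<Longrightarrow> j < n \<Longrightarrow> (1\<^sub>m n :: complex mat) $$ (i,j) = kd i j"
  unfolding kd_def by simp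

lemma sum_kd_left: "k < n \<Longrightarrow> (\<Sum>m<n. kd k m * f m) = (f k :: complex)"
  and sum_kd_right: "k < n \<Longrightarrow> (\<Sum>m<n. f m * kd m k) = (f k :: complex)"
  unfolding kd_def by (simp_all add: if_distrib if_distribR cong: if_cong)

lemma poly_mat_Z: "poly_mat n (Zmat n)"
  unfolding poly_mat_def by (auto intro: poly_fun_coord)

lemma poly_mat_A: "poly_mat n (\<lambda>q. Amat n q a)"
  unfolding poly_mat_def by (auto intro!: poly_fun_add poly_fun_mult poly_fun_const poly_fun_coord)

lemma has_dbr_Z_Z: "has_dbr n d p (Zmat n) (Zmat n) (dbr_self n (Zmat n p))"
proof (rule has_dbrI)
  fix i j k l assume ijkl: "i < n" "j < n" "k < n" "l < n"
  then have "entry_qpb n d p (Zmat n) (Zmat n) i j k l = cb n p (Zc i j) (Zc k l)"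
    unfolding entry_qpb_def by (simp add: qpb_coord coords_memI)
  also have "\<dots> = dbr_entry (dbr_self n (Zmat n p)) i j k l"
    using ijkl by (simp add: dbr_self_def cb_def ent_def mat_mult_entry[of _ n] kd_def algebra_simps
        del: index_mult_mat)
  finally show "entry_qpb n d p (Zmat n) (Zmat n) i j k l = dbr_entry (dbr_self n (Zmat n p)) i j k l" .
qed (simp add: dbr_self_def)

lemma AZ_entry:
  "k < n \<Longrightarrow> j < n \<Longrightarrow>
    (Amat n p a * Zmat n p) $$ (k,j) = p (Zc k j) + p (Wc a k) * (\<Sum>m<n. p (Vc a m) * p (Zc m j))"
  by (simp add: mat_mult_entry[of _ n] ring_distribs sum.distrib sum_distrib_left sum_kd_left mult.assoc
      del: index_mult_mat)

lemma ZA_entry: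
  "i < n \<Longrightarrow> l < n \<Longrightarrow>
    (Zmat n p * Amat n p a) $$ (i,l) = p (Zc i l) + (\<Sum>m<n. p (Zc i m) * p (Wc a m)) * p (Vc a l)"
  by (simp add: mat_mult_entry[of _ n] ring_distribs sum.distrib sum_distrib_right sum_kd_right mult.assoc
      del: index_mult_mat)

lemma AA_entry:
  "i < n \<Longrightarrow> l < n \<Longrightarrow> (Amat n p a * Amat n p b) $$ (i,l) =
    kd i l + p (Wc b i) * p (Vc b l) + p (Wc a i) * p (Vc a l) +
    p (Wc a i) * (\<Sum>m<n. p (Vc a m) * p (Wc b m)) * p (Vc b l)"
proof -
  assume il: "i < n" "l < n"
  have "(Amat n p a * Amat n p b) $$ (i,l) =
      (\<Sum>m<n. kd i m * kd m l) + (\<Sum>m<n. kd i m * (p (Wc b m) * p (Vc b l)))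
      + (\<Sum>m<n. p (Wc a i) * p (Vc a m) * kd m l)
      + p (Wc a i) * (\<Sum>m<n. p (Vc a m) * p (Wc b m)) * p (Vc b l)"
    using il by (simp add: mat_mult_entry[of _ n] algebra_simps sum.distrib sum_distrib_left sum_distrib_right
        del: index_mult_mat)
  then show ?thesis
    using il by (simp add: sum_kd_left sum_kd_right)
qed

lemma has_dbr_Z_A:
  assumes a: "a \<in> {1..d}"
  shows "has_dbr n d p (Zmat n) (\<lambda>q. Amat n q a) (dbr_ZA n (Zmat n p) (Amat n p a))"
proof (rule has_dbrI)
  fix i j k l assume ijkl: "i < n" "j < n" "k < n" "l < n"
  then have "entry_qpb n d p (Zmat n) (\<lambda>q. Amat n q a) i j k l =
      qpb n d (\<lambda>q. q (Zc i j)) (\<lambda>q. kd k l + q (Wc a k) * q (Vc a l)) p"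
    unfolding entry_qpb_def by simp
  also have "\<dots> = qpb n d (\<lambda>q. q (Zc i j)) (\<lambda>q. q (Wc a k) * q (Vc a l)) p"
    by (subst qpb_add_right) (auto intro!: poly_fun_mult poly_fun_coord poly_fun_const)
  also have "\<dots> = p (Wc a k) * cb n p (Zc i j) (Vc a l) + p (Vc a l) * cb n p (Zc i j) (Wc a k)"
    using ijkl a by (subst qpb_mult_right) (auto intro!: poly_fun_coord simp: qpb_coord coords_memI)
  also have "\<dots> = dbr_entry (dbr_ZA n (Zmat n p) (Amat n p a)) i j k l"
    using ijkl by (simp add: dbr_ZA_def cb_def AZ_entry ZA_entry one_mat_entry algebra_simps
        del: index_one_mat)
  finally show "entry_qpb n d p (Zmat n) (\<lambda>q. Amat n q a) i j k l =
      dbr_entry (dbr_ZA n (Zmat n p) (Amat n p a)) i j k l" .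
qed (simp add: dbr_ZA_def)

lemma entry_qpb_A_A:
  assumes "a \<in> {1..d}" "b \<in> {1..d}" and "i < n" "j < n" "k < n" "l < n"
  shows "entry_qpb n d p (\<lambda>q. Amat n q a) (\<lambda>q. Amat n q b) i j k l =
    p (Wc a i) * (p (Wc b k) * cb n p (Vc a j) (Vc b l) + p (Vc b l) * cb n p (Vc a j) (Wc b k)) +
    p (Vc a j) * (p (Wc b k) * cb n p (Wc a i) (Vc b l) + p (Vc b l) * cb n p (Wc a i) (Wc b k))"
proof -
  have "entry_qpb n d p (\<lambda>q. Amat n q a) (\<lambda>q. Amat n q b) i j k l =
      qpb n d (\<lambda>q. kd i j + q (Wc a i) * q (Vc a j)) (\<lambda>q. kd k l + q (Wc b k) * q (Vc b l)) p"
    unfolding entry_qpb_def using assms by simp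
  also have "\<dots> = qpb n d (\<lambda>q. q (Wc a i) * q (Vc a j)) (\<lambda>q. q (Wc b k) * q (Vc b l)) p"
    by (subst qpb_add_left, (auto intro!: poly_fun_mult poly_fun_coord poly_fun_const)[2],
        subst qpb_add_right, (auto intro!: poly_fun_mult poly_fun_coord poly_fun_const)[2]) simp
  also have "\<dots> = p (Wc a i) * qpb n d (\<lambda>q. q (Vc a j)) (\<lambda>q. q (Wc b k) * q (Vc b l)) p +
      p (Vc a j) * qpb n d (\<lambda>q. q (Wc a i)) (\<lambda>q. q (Wc b k) * q (Vc b l)) p"
    by (subst qpb_mult_left) (auto intro!: poly_fun_coord)
  also have "\<dots> = p (Wc a i) * (p (Wc b k) * cb n p (Vc a j) (Vc b l) + p (Vc b l) * cb n p (Vc a j) (Wc b k)) +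
      p (Vc a j) * (p (Wc b k) * cb n p (Wc a i) (Vc b l) + p (Vc b l) * cb n p (Wc a i) (Wc b k))"
    using assms by (simp add: qpb_mult_right poly_fun_coord qpb_coord coords_memI)
  finally show ?thesis .
qed

lemma has_dbr_A_A:
  assumes a: "a \<in> {1..d}"
  shows "has_dbr n d p (\<lambda>q. Amat n q a) (\<lambda>q. Amat n q a) (dbr_self n (Amat n p a))"
proof (rule has_dbrI)
  fix i j k l assume ijkl: "i < n" "j < n" "k < n" "l < n"
  have aa: "kd a a = 1" "ord_sign a a = 0" unfolding kd_def ord_sign_def by auto
  show "entry_qpb n d p (\<lambda>q. Amat n q a) (\<lambda>q. Amat n q a) i j k l = dbr_entry (dbr_self n (Amat n p a)) i j k l"
    using ijkl unfolding entry_qpb_A_A[OF a a ijkl]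
    by (simp add: dbr_self_def cb_def AA_entry one_mat_entry aa algebra_simps del: index_one_mat)
qed (simp add: dbr_self_def)

lemma has_dbr_A_A_less:
  assumes ab: "a \<in> {1..d}" "b \<in> {1..d}" and "b < a"
  shows "has_dbr n d p (\<lambda>q. Amat n q a) (\<lambda>q. Amat n q b) (dbr_AA n (Amat n p a) (Amat n p b))"
proof (rule has_dbrI)
  fix i j k l assume ijkl: "i < n" "j < n" "k < n" "l < n"
  have ba: "kd a b = 0" "kd b a = 0" "ord_sign b a = 1" "ord_sign a b = -1"
    using \<open>b < a\<close> unfolding kd_def ord_sign_def by auto
  show "entry_qpb n d p (\<lambda>q. Amat n q a) (\<lambda>q. Amat n q b) i j k l =
      dbr_entry (dbr_AA n (Amat n p a) (Amat n p b)) i j k l"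
    using ijkl unfolding entry_qpb_A_A[OF ab ijkl]
    by (simp add: dbr_AA_def cb_def AA_entry one_mat_entry ba algebra_simps add_divide_distrib
        del: index_one_mat)
qed (simp add: dbr_AA_def)

section \<open>The double bracket of Z_\<mu> and Z_\<eta>\<close>

definition Aprod :: "nat \<Rightarrow> nat \<Rightarrow> point \<Rightarrow> complex mat" where
  "Aprod n m q = mprod n (map (\<lambda>a. Amat n q a) (rev [1..<m+1]))"

lemma Aprod_0: "Aprod n 0 = (\<lambda>q. 1\<^sub>m n)"
  unfolding Aprod_def mprod_def by auto

lemma Aprod_Suc: "Aprod n (Suc m) = (\<lambda>q. Amat n q (Suc m) * Aprod n m q)"
  unfolding Aprod_def mprod_def by auto

lemma Aprod_carrier [simp]: "Aprod n m q \<in> carrier_mat n n"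
  by (induction m) (auto simp: Aprod_0 Aprod_Suc)

lemma poly_mat_Aprod: "poly_mat n (Aprod n m)"
  by (induction m) (simp_all add: Aprod_0 Aprod_Suc poly_mat_const poly_mat_mult poly_mat_A)

lemma generator_dims [simp]:
  "dim_row (Amat n q a) = n" "dim_col (Amat n q a) = n"
  "dim_row (Zmat n q) = n" "dim_col (Zmat n q) = n"
  "dim_row (Aprod n m q) = n" "dim_col (Aprod n m q) = n"
  using Amat_carrier[of n q a] Zmat_carrier[of n q] Aprod_carrier[of n m q]
  unfolding carrier_mat_def by auto

lemma mult_assoc_square:
  fixes A B C :: "complex mat"
  assumes "A \<in> carrier_mat (dim_row A) (dim_row A)" "B \<in> carrier_mat (dim_row A) (dim_row A)"
    "C \<in> carrier_mat (dim_row A) (dim_row A)"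
  shows "A * B * C = A * (B * C)"
  using assms by (rule assoc_mult_mat)

lemma one_mult_square: "A \<in> carrier_mat n n \<Longrightarrow> 1\<^sub>m n * A = (A :: complex mat)"
  and mult_one_square: "A \<in> carrier_mat n n \<Longrightarrow> A * 1\<^sub>m n = (A :: complex mat)"
  by simp_all

lemmas dbr_normalize = mult_assoc_square one_mult_square mult_one_square one_mat_entry
  algebra_simps add_divide_distrib diff_divide_distrib

text \<open>The three shapes of double brackets survive left multiplication by the next factor A_(m+1).\<close>

lemma has_dbr_Aprod:
  "m \<le> d \<Longrightarrow>
    (\<forall>a. m < a \<and> a \<le> d \<longrightarrow>
      has_dbr n d p (\<lambda>q. Amat n q a) (Aprod n m) (dbr_AA n (Amat n p a) (Aprod n m p))) \<and>
    has_dbr n d p (Aprod n m) (Aprod n m) (dbr_self n (Aprod n m p)) \<and>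
    has_dbr n d p (Zmat n) (Aprod n m) (dbr_ZA n (Zmat n p) (Aprod n m p))"
proof (induction m)
  case 0
  show ?case unfolding Aprod_0
    by (intro conjI allI impI has_dbr_cong[OF has_dbr_const_right])
      (simp_all add: dbr_AA_def dbr_self_def dbr_ZA_def dbr_normalize del: index_mult_mat index_one_mat)
next
  case (Suc m)
  then have IH_A: "\<And>a. m < a \<Longrightarrow> a \<le> d \<Longrightarrow>
      has_dbr n d p (\<lambda>q. Amat n q a) (Aprod n m) (dbr_AA n (Amat n p a) (Aprod n m p))"
    and IH_self: "has_dbr n d p (Aprod n m) (Aprod n m) (dbr_self n (Aprod n m p))"
    and IH_Z: "has_dbr n d p (Zmat n) (Aprod n m) (dbr_ZA n (Zmat n p) (Aprod n m p))"
    by auto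
  have m: "Suc m \<in> {1..d}" using Suc.prems by auto
  note poly = poly_mat_A[of n "Suc m"] poly_mat_Aprod[of n m]
  have A: "has_dbr n d p (\<lambda>q. Amat n q a) (Aprod n (Suc m)) (dbr_AA n (Amat n p a) (Aprod n (Suc m) p))"
    if a: "Suc m < a" "a \<le> d" for a
    unfolding Aprod_Suc
    by (rule has_dbr_cong[OF has_dbr_mult_right[OF poly IH_A has_dbr_A_A_less[OF _ m]]])
      (use a in \<open>simp_all add: dbr_AA_def Aprod_Suc dbr_normalize del: index_mult_mat index_one_mat\<close>)
  have Z: "has_dbr n d p (Zmat n) (Aprod n (Suc m)) (dbr_ZA n (Zmat n p) (Aprod n (Suc m) p))"
    unfolding Aprod_Suc
    by (rule has_dbr_cong[OF has_dbr_mult_right[OF poly IH_Z has_dbr_Z_A[OF m]]])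
      (simp_all add: dbr_ZA_def Aprod_Suc dbr_normalize del: index_mult_mat index_one_mat)
  have A_Aprod: "has_dbr n d p (\<lambda>q. Amat n q (Suc m)) (Aprod n m) (dbr_AA n (Amat n p (Suc m)) (Aprod n m p))"
    using IH_A[of "Suc m"] Suc.prems by auto
  have self: "has_dbr n d p (Aprod n (Suc m)) (Aprod n (Suc m)) (dbr_self n (Aprod n (Suc m) p))"
    unfolding Aprod_Suc
    by (rule has_dbr_cong[OF has_dbr_mult_left[OF poly
          has_dbr_mult_right[OF poly IH_self has_dbr_swap[OF A_Aprod]]
          has_dbr_mult_right[OF poly A_Aprod has_dbr_A_A[OF m]]]])
      (simp_all add: dbr_AA_def dbr_self_def dbr_swap_def Aprod_Suc dbr_normalize
        del: index_mult_mat index_one_mat)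
  show ?case using A Z self by (auto simp: Suc_less_eq2)
qed

lemma Zeta_eq: "Zeta n d c = (\<lambda>q. Zmat n q + c \<cdot>\<^sub>m (Aprod n d q * Zmat n q))"
  unfolding Zeta_def Smat_def Aprod_def by simp

lemma poly_mat_Zeta: "poly_mat n (Zeta n d c)"
  unfolding Zeta_eq by (intro poly_mat_add poly_mat_smult poly_mat_mult poly_mat_Z poly_mat_Aprod)

lemma shift_entry:
  fixes Z A :: "complex mat"
  assumes "Z \<in> carrier_mat n n" "A \<in> carrier_mat n n" "x < n" "y < n"
  shows "(Z + a \<cdot>\<^sub>m (A * Z)) $$ (x,y) = Z $$ (x,y) + a * (A * Z) $$ (x,y)"
  using assms by (simp del: index_mult_mat add: index_mult_mat(2,3))

lemma shift_mult_entry: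
  fixes Z A :: "complex mat"
  assumes Z: "Z \<in> carrier_mat n n" and A: "A \<in> carrier_mat n n" and xy: "x < n" "y < n"
  shows "((Z + a \<cdot>\<^sub>m (A * Z)) * (Z + b \<cdot>\<^sub>m (A * Z))) $$ (x,y) =
    (Z * Z) $$ (x,y) + b * (Z * (A * Z)) $$ (x,y) + a * (A * (Z * Z)) $$ (x,y)
    + (a * b) * (A * (Z * (A * Z))) $$ (x,y)"
proof -
  have AZ: "A * Z \<in> carrier_mat n n" using A Z by simp
  have "((Z + a \<cdot>\<^sub>m (A * Z)) * (Z + b \<cdot>\<^sub>m (A * Z))) $$ (x,y) =
      (\<Sum>m<n. (Z $$ (x,m) + a * (A * Z) $$ (x,m)) * (Z $$ (m,y) + b * (A * Z) $$ (m,y)))"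
    using xy Z A by (subst mat_mult_entry[of _ n]) (auto intro!: sum.cong simp: shift_entry)
  also have "\<dots> =
      (\<Sum>m<n. Z $$ (x,m) * Z $$ (m,y)) + b * (\<Sum>m<n. Z $$ (x,m) * (A * Z) $$ (m,y))
      + a * (\<Sum>m<n. (A * Z) $$ (x,m) * Z $$ (m,y)) + (a * b) * (\<Sum>m<n. (A * Z) $$ (x,m) * (A * Z) $$ (m,y))"
    by (simp add: sum.distrib sum_distrib_left algebra_simps del: index_mult_mat)
  also have "\<dots> = (Z * Z) $$ (x,y) + b * (Z * (A * Z)) $$ (x,y) + a * ((A * Z) * Z) $$ (x,y)
      + (a * b) * ((A * Z) * (A * Z)) $$ (x,y)"
    using Z A AZ xy by (simp only: mat_mult_entry)
  finally show ?thesis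
    using assoc_mult_mat[OF A Z Z] assoc_mult_mat[OF A Z AZ] by simp
qed

definition dbr_Zeta :: "nat \<Rightarrow> complex mat \<Rightarrow> complex mat \<Rightarrow> complex mat \<Rightarrow> dbr" where
  "dbr_Zeta n Z P Q = [(1/2, 1\<^sub>m n, P * Q), (-1/2, Q * P, 1\<^sub>m n),
     (1/2, P, Z), (-1/2, Z, P), (1/2, Q, Z), (-1/2, Z, Q)]"

lemma has_dbr_Zeta:
  "has_dbr n d p (Zeta n d \<mu>) (Zeta n d \<eta>) (dbr_Zeta n (Zmat n p) (Zeta n d \<mu> p) (Zeta n d \<eta> p))"
proof -
  note A = poly_mat_Aprod[of n d] and Z = poly_mat_Z[of n]
  note S = poly_mat_mult[OF A Z]
  have A_A: "has_dbr n d p (Aprod n d) (Aprod n d) (dbr_self n (Aprod n d p))"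
    and Z_A: "has_dbr n d p (Zmat n) (Aprod n d) (dbr_ZA n (Zmat n p) (Aprod n d p))"
    using has_dbr_Aprod[of d d n p] by auto
  note Z_Z = has_dbr_Z_Z[of n d p]
  note Z_S = has_dbr_mult_right[OF A Z Z_Z Z_A]
  note S_Z = has_dbr_mult_left[OF A Z Z_Z has_dbr_swap[OF Z_A]]
  note A_S = has_dbr_mult_right[OF A Z has_dbr_swap[OF Z_A] A_A]
  note S_S = has_dbr_mult_left[OF A Z Z_S A_S]
  note Z_Zeta = has_dbr_add_right[OF Z poly_mat_smult[OF S] Z_Z has_dbr_smult_right[OF S Z_S]]
  note S_Zeta = has_dbr_add_right[OF Z poly_mat_smult[OF S] S_Z has_dbr_smult_right[OF S S_S]]
  note Zeta_Zeta = has_dbr_add_left[OF Z poly_mat_smult[OF S] Z_Zeta has_dbr_smult_left[OF S S_Zeta]]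
  \<comment> \<open>Opaque names keep the simplifier from expanding the entries of Z into coordinates.\<close>
  define Zp Ap where "Zp = Zmat n p" and "Ap = Aprod n d p"
  have c: "Zp \<in> carrier_mat n n" "Ap \<in> carrier_mat n n" unfolding Zp_def Ap_def by simp_all
  then have [simp]: "dim_row Zp = n" "dim_col Zp = n" "dim_row Ap = n" "dim_col Ap = n" by auto
  show ?thesis
    unfolding Zeta_eq Zp_def[symmetric] Ap_def[symmetric]
    by (rule has_dbr_cong[OF Zeta_Zeta[unfolded Zeta_eq, folded Zp_def Ap_def]])
      (use c in \<open>simp_all del: index_mult_mat index_one_mat index_add_mat index_smult_mat
        add: dbr_Zeta_def dbr_self_def dbr_ZA_def dbr_swap_def shift_entry shift_mult_entry dbr_normalize\<close>)
qed

lemma mtrace_carrier: "A \<in> carrier_mat n n \<Longrightarrow> mtrace A = (\<Sum>i<n. A $$ (i,i))"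
  unfolding mtrace_def by simp

lemma mtrace_mult_comm:
  fixes A B :: "complex mat"
  assumes A: "A \<in> carrier_mat n n" and B: "B \<in> carrier_mat n n"
  shows "mtrace (A * B) = mtrace (B * A)"
proof -
  have "mtrace (A * B) = (\<Sum>i<n. \<Sum>m<n. A $$ (i,m) * B $$ (m,i))"
    using A B by (simp add: mtrace_carrier[of _ n] mat_mult_entry del: index_mult_mat)
  also have "\<dots> = (\<Sum>m<n. \<Sum>i<n. B $$ (m,i) * A $$ (i,m))"
    by (subst sum.swap) (simp add: mult.commute)
  also have "\<dots> = mtrace (B * A)"
    using A B by (simp add: mtrace_carrier[of _ n] mat_mult_entry del: index_mult_mat)
  finally show ?thesis .
qed

lemma mtrace_add:
  "A \<in> carrier_mat n n \<Longrightarrow> B \<in> carrier_mat n n \<Longrightarrow> mtrace (A + B) = mtrace A + mtrace (B :: complex mat)"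
  by (simp add: mtrace_carrier[of _ n] sum.distrib)

lemma mtrace_smult: "A \<in> carrier_mat n n \<Longrightarrow> mtrace (c \<cdot>\<^sub>m A) = c * mtrace (A :: complex mat)"
  by (simp add: mtrace_carrier[of _ n] sum_distrib_left)

lemma pow_mat_mult_comm:
  fixes A :: "complex mat"
  assumes A: "A \<in> carrier_mat n n"
  shows "A ^\<^sub>m k * A = A * A ^\<^sub>m k"
proof (induction k)
  case (Suc k)
  have "A ^\<^sub>m Suc k * A = (A * A ^\<^sub>m k) * A" using Suc by simp
  also have "\<dots> = A * A ^\<^sub>m Suc k" using A by (simp add: assoc_mult_mat[of _ n n _ n _ n])
  finally show ?case .
qed (use A in simp)

lemma pow_mat_pow_mat_comm:
  fixes A :: "complex mat"
  assumes A: "A \<in> carrier_mat n n"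
  shows "A ^\<^sub>m k * A ^\<^sub>m m = A ^\<^sub>m m * A ^\<^sub>m k"
proof (induction m)
  case (Suc m)
  have "A ^\<^sub>m k * A ^\<^sub>m Suc m = (A ^\<^sub>m m * A ^\<^sub>m k) * A"
    using A Suc by (simp add: assoc_mult_mat[of _ n n _ n _ n, symmetric])
  also have "\<dots> = A ^\<^sub>m m * (A * A ^\<^sub>m k)"
    using A by (simp add: assoc_mult_mat[of _ n n _ n _ n] pow_mat_mult_comm)
  also have "\<dots> = A ^\<^sub>m Suc m * A ^\<^sub>m k"
    using A by (simp add: assoc_mult_mat[of _ n n _ n _ n])
  finally show ?case .
qed (use A in simp)

lemma mtrace_swap_commuting_factors:
  fixes F G P Q :: "complex mat"
  assumes c: "F \<in> carrier_mat n n" "G \<in> carrier_mat n n" "P \<in> carrier_mat n n" "Q \<in> carrier_mat n n"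
    and "F * P = P * F" and "G * Q = Q * G"
  shows "mtrace (F * P * G * Q) = mtrace (F * Q * G * P)"
proof -
  note assoc = assoc_mult_mat[of _ n n _ n _ n]
  have "mtrace (F * Q * G * P) = mtrace (P * (F * Q * G))" using c by (intro mtrace_mult_comm[of _ n]) auto
  also have "\<dots> = mtrace ((P * F) * (Q * G))" using c by (simp add: assoc)
  also have "\<dots> = mtrace ((F * P) * (G * Q))" using assms(5,6) by simp
  also have "\<dots> = mtrace (F * P * G * Q)" using c by (simp add: assoc)
  finally show ?thesis by simp
qed

lemma mtrace_swap_commuting_products:
  fixes F G P Q :: "complex mat"
  assumes c: "F \<in> carrier_mat n n" "G \<in> carrier_mat n n" "P \<in> carrier_mat n n" "Q \<in> carrier_mat n n"
    and "F * P = P * F" and "G * Q = Q * G"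
  shows "mtrace (F * (P * Q) * G) = mtrace (F * G * (Q * P))"
proof -
  note assoc = assoc_mult_mat[of _ n n _ n _ n]
  have "mtrace (F * G * (Q * P)) = mtrace ((F * G * Q) * P)" using c by (simp add: assoc)
  also have "\<dots> = mtrace (P * (F * G * Q))" using c by (intro mtrace_mult_comm[of _ n]) auto
  also have "\<dots> = mtrace ((P * F) * (G * Q))" using c by (simp add: assoc)
  also have "\<dots> = mtrace ((F * P) * (Q * G))" using assms(5,6) by simp
  also have "\<dots> = mtrace (F * (P * Q) * G)" using c by (simp add: assoc)
  finally show ?thesis by simp
qed

lemma mtrace_move_commuting:
  fixes F G P Z :: "complex mat"
  assumes c: "F \<in> carrier_mat n n" "G \<in> carrier_mat n n" "P \<in> carrier_mat n n" "Z \<in> carrier_mat n n"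
    and "F * P = P * F" and "G * P = P * G" and "F * G = G * F"
  shows "mtrace (F * Z * G * P) = mtrace (F * P * G * Z)"
proof -
  note assoc = assoc_mult_mat[of _ n n _ n _ n]
  have "mtrace (F * Z * G * P) = mtrace ((F * Z) * (G * P))" using c by (simp add: assoc)
  also have "\<dots> = mtrace ((G * P) * (F * Z))" using c by (intro mtrace_mult_comm[of _ n]) auto
  also have "(G * P) * (F * Z) = (G * (P * F)) * Z" using c by (simp add: assoc)
  also have "\<dots> = ((G * F) * P) * Z" using c assms(5) by (simp add: assoc)
  also have "\<dots> = F * (G * P) * Z" using c by (simp add: assoc flip: assms(7))
  also have "\<dots> = F * P * G * Z" using c assms(6) by (simp add: assoc)
  finally show ?thesis .
qed

fun dbr_contract :: "complex mat \<Rightarrow> complex mat \<Rightarrow> dbr \<Rightarrow> complex" where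
  "dbr_contract F G [] = 0"
| "dbr_contract F G ((c,U,Y) # xs) = c * mtrace (F * Y * G * U) + dbr_contract F G xs"

lemma sum_contract_dbr_entry:
  fixes F G :: "complex mat"
  assumes F: "F \<in> carrier_mat n n" and G: "G \<in> carrier_mat n n" and "dbr_carrier n xs"
  shows "(\<Sum>i<n. \<Sum>j<n. F $$ (i,j) * (\<Sum>a<n. \<Sum>b<n. G $$ (a,b) * dbr_entry xs j i b a)) =
    dbr_contract F G xs"
  using assms(3)
proof (induction xs)
  case (Cons x xs)
  obtain c U Y where x: "x = (c,U,Y)" by (cases x)
  with Cons.prems have UY: "U \<in> carrier_mat n n" "Y \<in> carrier_mat n n" and "dbr_carrier n xs" by auto
  have "F * Y * G * U = F * (Y * (G * U))" using F G UY by (simp add: assoc_mult_mat[of _ n n _ n _ n])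
  then have "mtrace (F * Y * G * U) =
      (\<Sum>i<n. \<Sum>j<n. F $$ (i,j) * (\<Sum>a<n. Y $$ (j,a) * (\<Sum>b<n. G $$ (a,b) * U $$ (b,i))))"
    using F G UY by (simp add: mtrace_carrier[of _ n] mat_mult_entry[of _ n] del: index_mult_mat)
  with Cons.IH \<open>dbr_carrier n xs\<close> show ?case
    by (simp add: x sum.distrib ring_distribs sum_distrib_left algebra_simps)
qed simp

lemma dbr_contract_Zeta:
  fixes Z S :: "complex mat" and \<mu> \<eta> :: complex
  assumes Z: "Z \<in> carrier_mat n n" and S: "S \<in> carrier_mat n n"
  defines "P \<equiv> Z + \<mu> \<cdot>\<^sub>m S" and "Q \<equiv> Z + \<eta> \<cdot>\<^sub>m S"
  shows "dbr_contract (P ^\<^sub>m a) (Q ^\<^sub>m b) (dbr_Zeta n Z P Q) = 0"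
proof -
  have PQ: "P \<in> carrier_mat n n" "Q \<in> carrier_mat n n" unfolding P_def Q_def using Z S by auto
  define F G where "F = P ^\<^sub>m a" and "G = Q ^\<^sub>m b"
  have FG: "F \<in> carrier_mat n n" "G \<in> carrier_mat n n" unfolding F_def G_def using PQ by auto
  have FP: "F * P = P * F" and GQ: "G * Q = Q * G"
    unfolding F_def G_def using PQ by (simp_all add: pow_mat_mult_comm)
  define \<tau> where "\<tau> X Y = mtrace (F * X * G * Y)" for X Y
  have \<tau>_shift: "\<tau> (Z + c \<cdot>\<^sub>m S) Y = \<tau> Z Y + c * \<tau> S Y" "\<tau> Y (Z + c \<cdot>\<^sub>m S) = \<tau> Y Z + c * \<tau> Y S"
    if "Y \<in> carrier_mat n n" for Y c
    unfolding \<tau>_def using that Z S FG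
    by (simp_all add: mult_add_distrib_mat[of _ n n] add_mult_distrib_mat[of _ n n]
        mult_smult_distrib[of _ n n] mult_smult_assoc_mat[of _ n n] mtrace_add[of _ n] mtrace_smult[of _ n])
  have lin: "\<tau> Z P - \<tau> P Z = \<mu> * (\<tau> Z S - \<tau> S Z)" "\<tau> Z Q - \<tau> Q Z = \<eta> * (\<tau> Z S - \<tau> S Z)"
    "\<tau> P Q - \<tau> Q P = (\<eta> - \<mu>) * (\<tau> Z S - \<tau> S Z)"
    unfolding P_def Q_def using Z S by (simp_all add: \<tau>_shift algebra_simps)
  have symm: "\<tau> P Q = \<tau> Q P"
    unfolding \<tau>_def using mtrace_swap_commuting_factors[OF FG PQ FP GQ] .
  have "(\<mu> + \<eta>) * (\<tau> Z S - \<tau> S Z) = 0"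
  proof (cases "\<mu> = \<eta>")
    case True
    then have "Q = P" unfolding P_def Q_def by simp
    then have "G * P = P * G" "F * G = G * F"
      using GQ PQ unfolding F_def G_def by (simp_all add: pow_mat_pow_mat_comm)
    then have "\<tau> Z P = \<tau> P Z" unfolding \<tau>_def using mtrace_move_commuting[OF FG PQ(1) Z FP] by simp
    then show ?thesis using lin True by simp
  next
    case False
    then show ?thesis using lin symm by simp
  qed
  moreover have "dbr_contract F G (dbr_Zeta n Z P Q) = 1/2 * (\<tau> Z P - \<tau> P Z + (\<tau> Z Q - \<tau> Q Z))"
    using mtrace_swap_commuting_products[OF FG PQ FP GQ] FG PQ
    unfolding \<tau>_def by (simp add: dbr_Zeta_def algebra_simps)
  ultimately show ?thesis unfolding F_def G_def using lin by (simp add: algebra_simps)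
qed

section \<open>Brackets of traces of powers\<close>

definition pd_mat :: "nat \<Rightarrow> (point \<Rightarrow> complex mat) \<Rightarrow> coord \<Rightarrow> point \<Rightarrow> complex mat" where
  "pd_mat n M c p = mat n n (\<lambda>(i,j). pd (\<lambda>q. M q $$ (i,j)) c p)"

lemma pd_mat_carrier [simp]: "pd_mat n M c p \<in> carrier_mat n n"
  unfolding pd_mat_def by simp

lemma pd_mat_entry [simp]: "i < n \<Longrightarrow> j < n \<Longrightarrow> pd_mat n M c p $$ (i,j) = pd (\<lambda>q. M q $$ (i,j)) c p"
  unfolding pd_mat_def by simp

lemma pd_mat_dim [simp]: "dim_row (pd_mat n M c p) = n" "dim_col (pd_mat n M c p) = n"
  unfolding pd_mat_def by simp_all

lemma pd_mat_mult:
  assumes M: "poly_mat n M" and N: "poly_mat n N"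
  shows "pd_mat n (\<lambda>q. M q * N q) c p = pd_mat n M c p * N p + M p * pd_mat n N c p"
proof (rule eq_matI)
  fix i j assume "i < dim_row (pd_mat n M c p * N p + M p * pd_mat n N c p)"
    and "j < dim_col (pd_mat n M c p * N p + M p * pd_mat n N c p)"
  then have ij: "i < n" "j < n" using M N by auto
  have "pd_mat n (\<lambda>q. M q * N q) c p $$ (i,j) = pd (\<lambda>q. \<Sum>m<n. M q $$ (i,m) * N q $$ (m,j)) c p"
    using ij by (simp add: mult_entry_fun[OF M N ij] del: index_mult_mat)
  also have "\<dots> = (\<Sum>m<n. pd (\<lambda>q. M q $$ (i,m)) c p * N p $$ (m,j))
      + (\<Sum>m<n. M p $$ (i,m) * pd (\<lambda>q. N q $$ (m,j)) c p)"
    using M N ij by (subst pd_sum) (auto intro!: poly_fun_mult poly_mat_entry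
        simp: pd_mult poly_mat_entry sum.distrib add.commute)
  also have "\<dots> = (pd_mat n M c p * N p + M p * pd_mat n N c p) $$ (i,j)"
    using M N ij by (simp del: index_mult_mat add: mat_mult_entry[of _ n] index_mult_mat(2,3))
  finally show "pd_mat n (\<lambda>q. M q * N q) c p $$ (i,j) = (pd_mat n M c p * N p + M p * pd_mat n N c p) $$ (i,j)" .
qed (use M N in auto)

lemma pd_mtrace:
  assumes "poly_mat n M"
  shows "pd (\<lambda>q. mtrace (M q)) c p = mtrace (pd_mat n M c p)"
proof -
  have "(\<lambda>q. mtrace (M q)) = (\<lambda>q. \<Sum>i<n. M q $$ (i,i))"
    using assms by (simp add: mtrace_def)
  then have "pd (\<lambda>q. mtrace (M q)) c p = (\<Sum>i<n. pd (\<lambda>q. M q $$ (i,i)) c p)"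
    using assms by (simp, subst pd_sum) (auto intro: poly_mat_entry)
  then show ?thesis by (simp add: mtrace_def)
qed

text \<open>
  The commuting factor \<open>Y\<close> makes the statement inductive: cyclicity of the trace moves the
  factor \<open>M p\<close> produced by the Leibniz rule into \<open>Y\<close>.
\<close>

lemma mtrace_pd_mat_pow:
  assumes M: "poly_mat n M"
  shows "Y \<in> carrier_mat n n \<Longrightarrow> Y * M p = M p * Y \<Longrightarrow>
    mtrace (Y * pd_mat n (\<lambda>q. M q ^\<^sub>m k) c p) = of_nat k * mtrace (Y * M p ^\<^sub>m (k - 1) * pd_mat n M c p)"
proof (induction k arbitrary: Y)
  case 0
  have "pd_mat n (\<lambda>q. M q ^\<^sub>m 0) c p = 0\<^sub>m n n"
    using M by (intro eq_matI) (simp_all add: pd_mat_def)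
  with 0 show ?case by (simp add: mtrace_carrier[of _ n] scalar_prod_def)
next
  case (Suc k)
  note assoc = assoc_mult_mat[of _ n n _ n _ n]
  have MY: "M p * Y \<in> carrier_mat n n" "M p * Y * M p = M p * (M p * Y)"
    using M Suc.prems by (simp_all add: assoc)
  define D where "D = pd_mat n (\<lambda>q. M q ^\<^sub>m k) c p"
  define dM where "dM = pd_mat n M c p"
  have [simp]: "D \<in> carrier_mat n n" "dM \<in> carrier_mat n n" unfolding D_def dM_def by simp_all
  have "pd_mat n (\<lambda>q. M q ^\<^sub>m Suc k) c p = D * M p + M p ^\<^sub>m k * dM"
    unfolding D_def dM_def using pd_mat_mult[OF poly_mat_pow[OF M, of k] M, of c p] by simp
  then have "mtrace (Y * pd_mat n (\<lambda>q. M q ^\<^sub>m Suc k) c p) = mtrace ((Y * D) * M p) + mtrace (Y * M p ^\<^sub>m k * dM)"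
    using M Suc.prems by (simp add: mult_add_distrib_mat[of _ n n _ n] mtrace_add[of _ n] assoc)
  also have "mtrace ((Y * D) * M p) = mtrace (M p * (Y * D))"
    using M Suc.prems by (intro mtrace_mult_comm[of _ n]) auto
  also have "\<dots> = mtrace ((M p * Y) * D)"
    using M Suc.prems by (simp add: assoc)
  also have "\<dots> = of_nat k * mtrace (M p * Y * M p ^\<^sub>m (k - 1) * dM)"
    unfolding D_def dM_def by (rule Suc.IH[OF MY])
  also have "M p * Y * M p ^\<^sub>m (k - 1) * dM = Y * M p ^\<^sub>m k * dM" if "k > 0"
  proof -
    have "M p * Y * M p ^\<^sub>m (k - 1) = Y * (M p * M p ^\<^sub>m (k - 1))"
      using M Suc.prems(1) by (simp add: assoc flip: Suc.prems(2))
    also have "\<dots> = Y * M p ^\<^sub>m k"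
      using that M pow_mat_mult_comm[of "M p" n "k - 1"] by (cases k) auto
    finally show ?thesis by simp
  qed
  then have "of_nat k * mtrace (M p * Y * M p ^\<^sub>m (k - 1) * dM) = of_nat k * mtrace (Y * M p ^\<^sub>m k * dM)"
    by (cases "k = 0") auto
  finally show ?case unfolding dM_def by (simp add: algebra_simps)
qed

lemma pd_mtrace_pow:
  assumes P: "poly_mat n P"
  shows "pd (\<lambda>q. mtrace (P q ^\<^sub>m k)) c p =
    (\<Sum>i<n. \<Sum>j<n. (of_nat k * (P p ^\<^sub>m (k - 1)) $$ (i,j)) * pd (\<lambda>q. P q $$ (j,i)) c p)"
proof -
  have P': "P p \<in> carrier_mat n n" using P by simp
  have "pd (\<lambda>q. mtrace (P q ^\<^sub>m k)) c p = mtrace (1\<^sub>m n * pd_mat n (\<lambda>q. P q ^\<^sub>m k) c p)"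
    by (simp add: pd_mtrace[OF poly_mat_pow[OF P]] one_mult_square)
  also have "\<dots> = of_nat k * mtrace (1\<^sub>m n * P p ^\<^sub>m (k - 1) * pd_mat n P c p)"
    using P' by (intro mtrace_pd_mat_pow[OF P]) auto
  also have "\<dots> = of_nat k * (\<Sum>i<n. \<Sum>j<n. (P p ^\<^sub>m (k - 1)) $$ (i,j) * pd (\<lambda>q. P q $$ (j,i)) c p)"
    using P' by (simp add: mtrace_carrier[of _ n] mat_mult_entry[of _ n] pd_mat_def del: index_mult_mat)
  finally show ?thesis by (simp add: sum_distrib_left mult.assoc)
qed

lemma qpb_mtrace_pow:
  assumes P: "poly_mat n P" and Q: "poly_mat n Q" and PQ: "has_dbr n d p P Q xs"
  shows "qpb n d (\<lambda>q. mtrace (P q ^\<^sub>m k)) (\<lambda>q. mtrace (Q q ^\<^sub>m l)) p =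
    of_nat k * of_nat l * dbr_contract (P p ^\<^sub>m (k - 1)) (Q p ^\<^sub>m (l - 1)) xs"
proof -
  define F G where "F = P p ^\<^sub>m (k - 1)" and "G = Q p ^\<^sub>m (l - 1)"
  have FG: "F \<in> carrier_mat n n" "G \<in> carrier_mat n n" unfolding F_def G_def using P Q by simp_all
  have grad: "pd (\<lambda>q. mtrace (R q ^\<^sub>m m)) a p =
      (\<Sum>x\<in>{..<n} \<times> {..<n}. of_nat m * (R p ^\<^sub>m (m - 1)) $$ x * pd (\<lambda>q. R q $$ (snd x, fst x)) a p)"
    if "poly_mat n R" for R m a
    using pd_mtrace_pow[OF that] by (simp add: sum.cartesian_product case_prod_beta)
  have "qpb n d (\<lambda>q. mtrace (P q ^\<^sub>m k)) (\<lambda>q. mtrace (Q q ^\<^sub>m l)) p =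
      (\<Sum>x\<in>{..<n} \<times> {..<n}. of_nat k * F $$ x * (\<Sum>y\<in>{..<n} \<times> {..<n}. of_nat l * G $$ y *
        entry_qpb n d p P Q (snd x) (fst x) (snd y) (fst y)))"
    unfolding F_def G_def entry_qpb_def
    by (subst qpb_gradient_comb_left[OF _ grad[OF P]], simp,
        subst qpb_gradient_comb_right[OF _ grad[OF Q]], simp_all)
  also have "\<dots> = of_nat k * of_nat l *
      (\<Sum>i<n. \<Sum>j<n. F $$ (i,j) * (\<Sum>a<n. \<Sum>b<n. G $$ (a,b) * dbr_entry xs j i b a))"
    using PQ unfolding has_dbr_def
    by (simp add: sum.cartesian_product' sum_distrib_left algebra_simps)
  also have "\<dots> = of_nat k * of_nat l * dbr_contract F G xs"
    using PQ unfolding has_dbr_def by (simp add: sum_contract_dbr_entry[OF FG])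
  finally show ?thesis unfolding F_def G_def .
qed

theorem mainTheorem17:
  fixes n d k l :: nat and q \<mu> \<eta> :: complex and p :: point
  assumes "n \<ge> 1" and "d \<ge> 1" and "q \<noteq> 0" and "\<forall>m::nat. m > 0 \<longrightarrow> q ^ m \<noteq> 1"
    and "p \<in> Mx n d q"
  shows "qpb n d (trZpow n d \<mu> k) (trZpow n d \<eta> l) p = 0"
proof -
  have Zeta_p: "Zeta n d c p = Zmat n p + c \<cdot>\<^sub>m (Aprod n d p * Zmat n p)" for c
    unfolding Zeta_eq ..
  have "trZpow n d c m = (\<lambda>q. mtrace (Zeta n d c q ^\<^sub>m m))" for c m
    unfolding trZpow_def ..
  then have "qpb n d (trZpow n d \<mu> k) (trZpow n d \<eta> l) p =
      of_nat k * of_nat l * dbr_contract (Zeta n d \<mu> p ^\<^sub>m (k - 1)) (Zeta n d \<eta> p ^\<^sub>m (l - 1))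
        (dbr_Zeta n (Zmat n p) (Zeta n d \<mu> p) (Zeta n d \<eta> p))"
    using qpb_mtrace_pow[OF poly_mat_Zeta poly_mat_Zeta has_dbr_Zeta] by simp
  also have "\<dots> = 0"
    unfolding Zeta_p by (simp add: dbr_contract_Zeta)
  finally show ?thesis .
qed

end
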